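(* Let $u:[0,T]\times U\to[0,\infty)$ with each $u(t)$ continuous, and $t\in(0,T]$. The family of sets $\Gamma^+_{\eta,\sigma,r_0}(u,t)$ is monotone decreasing with respect to $\eta$ and $r_0$ and monotone increasing with respect to $\sigma$. Furthermore $$\Gamma^+(u,t)=\bigcup_{\eta>0}\bigcap_{\sigma>0}\bigcup_{r_0>0}\Gamma^+_{\eta,\sigma,r_0}(u,t),$$ and consequently, if $\mathcal{H}^{d-1}(\Gamma^+(u,t))>0$ then there is $\eta>0$ such that for every $\sigma>0$ there is $r_0(\sigma)>0$ with $\mathcal{H}^{d-1}(\Gamma^+_{\eta,\sigma,r_0}(u,t))>0$.
   Context: $U\subset\mathbb{R}^d$ open, $\mu_+>0$, $\Omega(t)=\{u(t)>0\}$. For $x_0\in\partial\Omega(t_0)$: $V_n(t_0,x_0)>0$ means there are $\eta,r_0>0$ with $\{x:|x-x_0|\le\eta(t_0-s)\}\subset\Omega(s)^\complement$ for all $t_0-r_0\le s<t_0$; for given $\eta,r_0>0$ one writes $V_n^{r_0}(t_0,x_0)\ge\eta$ if this holds with those specific $\eta,r_0$. $D_+u(t,x_0)=\{p: u(t,x)\le p\cdot(x-x_0)+o(|x-x_0|)\text{ for }x\in\overline{\Omega(t)}\}$, and for $\sigma,r_0>0$, $D_+^{\sigma,r_0}u(t,x_0)=\{p: u(t,x)\le p\cdot(x-x_0)+\sigma|x-x_0|\text{ for }x\in B_{r_0}(x_0)\cap\overline{\Omega(t)}\}$. Then $\Gamma^+(u,t)=\{x\in\partial\Omega(t): V_n(t,x)>0,\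 |p|^2<1+\mu_+\text{ for some }p\in D_+u(t,x)\}$ and $\Gamma^+_{\eta,\sigma,r_0}(u,t)=\{x\in\partial\Omega(t): V_n^{r_0}(t,x)\ge\eta\text{ and there is }p\in D_+^{\sigma,r_0}u(t,x)\text{ with }|p|^2-(1+\mu_+)<-\eta\}$. *)

theory Defs
  imports "HOL-Analysis.Analysis"
begin

definition hausdorff_const :: "real \<Rightarrow> real" where
  "hausdorff_const s = pi powr (s / 2) / Gamma (s / 2 + 1)"

text \<open>Contribution of one covering set; convention 0^0 = 1 so that H^0 is counting measure.\<close>
definition hausdorff_piece :: "real \<Rightarrow> 'a::metric_space set \<Rightarrow> ennreal" where
  "hausdorff_piece s C =
     (if C = {} then 0
      else ennreal (hausdorff_const s *
             (if s = 0 then 1 else (diameter C / 2) powr s)))"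

definition hausdorff_pre :: "real \<Rightarrow> real \<Rightarrow> 'a::metric_space set \<Rightarrow> ennreal" where
  "hausdorff_pre s \<delta> A =
     (INF C \<in> {C :: nat \<Rightarrow> 'a set. A \<subseteq> (\<Union>i. C i) \<and>
                 (\<forall>i. bounded (C i) \<and> diameter (C i) \<le> \<delta>)}.
        (\<Sum>i. hausdorff_piece s (C i)))"

definition hausdorff_measure :: "real \<Rightarrow> 'a::metric_space set \<Rightarrow> ennreal" where
  "hausdorff_measure s A = (SUP \<delta> \<in> {0<..}. hausdorff_pre s \<delta> A)"

definition Omega :: "'a::euclidean_space set \<Rightarrow> (real \<Rightarrow> 'a \<Rightarrow> real) \<Rightarrow> real \<Rightarrow> 'a set" where
  "Omega U u t = {x \<in> U. u t x > 0}"

definition Vn_ge :: "'a::euclidean_space set \<Rightarrow> (real \<Rightarrow> 'a \<Rightarrow> real) \<Rightarrow> real \<Rightarrow> real \<Rightarrow> 'a \<Rightarrow> real \<Rightarrow> bool" where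
  "Vn_ge U u r0 t0 x0 \<eta> \<longleftrightarrow>
     (\<forall>s. t0 - r0 \<le> s \<and> s < t0 \<longrightarrow> cball x0 (\<eta> * (t0 - s)) \<subseteq> - Omega U u s)"

definition Vn_pos :: "'a::euclidean_space set \<Rightarrow> (real \<Rightarrow> 'a \<Rightarrow> real) \<Rightarrow> real \<Rightarrow> 'a \<Rightarrow> bool" where
  "Vn_pos U u t0 x0 \<longleftrightarrow> (\<exists>\<eta>>0. \<exists>r0>0. Vn_ge U u r0 t0 x0 \<eta>)"

text \<open>D_+ u(t,x0): the o(|x-x0|) condition written out.\<close>
definition Dplus :: "'a::euclidean_space set \<Rightarrow> (real \<Rightarrow> 'a \<Rightarrow> real) \<Rightarrow> real \<Rightarrow> 'a \<Rightarrow> 'a set" where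
  "Dplus U u t x0 = {p. \<forall>\<epsilon>>0. \<exists>\<delta>>0. \<forall>x \<in> closure (Omega U u t) \<inter> U.
        norm (x - x0) < \<delta> \<longrightarrow> u t x \<le> p \<bullet> (x - x0) + \<epsilon> * norm (x - x0)}"

definition Dplus_sr :: "'a::euclidean_space set \<Rightarrow> (real \<Rightarrow> 'a \<Rightarrow> real) \<Rightarrow> real \<Rightarrow> real \<Rightarrow> real \<Rightarrow> 'a \<Rightarrow> 'a set" where
  "Dplus_sr U u \<sigma> r0 t x0 = {p. \<forall>x \<in> ball x0 r0 \<inter> closure (Omega U u t) \<inter> U.
        u t x \<le> p \<bullet> (x - x0) + \<sigma> * norm (x - x0)}"

definition Gamma_plus :: "'a::euclidean_space set \<Rightarrow> real \<Rightarrow> (real \<Rightarrow> 'a \<Rightarrow> real) \<Rightarrow> real \<Rightarrow> 'a set" where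
  "Gamma_plus U \<mu> u t = {x \<in> frontier (Omega U u t). Vn_pos U u t x \<and>
        (\<exists>p \<in> Dplus U u t x. (norm p)^2 < 1 + \<mu>)}"

definition Gamma_plus_param :: "'a::euclidean_space set \<Rightarrow> real \<Rightarrow> (real \<Rightarrow> 'a \<Rightarrow> real) \<Rightarrow> real \<Rightarrow> real \<Rightarrow> real \<Rightarrow> real \<Rightarrow> 'a set" where
  "Gamma_plus_param U \<mu> u \<eta> \<sigma> r0 t = {x \<in> frontier (Omega U u t). Vn_ge U u r0 t x \<eta> \<and>
        (\<exists>p \<in> Dplus_sr U u \<sigma> r0 t x. (norm p)^2 - (1 + \<mu>) < - \<eta>)}"

end

theory Submission
  imports Defs
begin

text \<open>A superdifferential \<open>p\<close> with \<open>|p|\<^sup>2 < 1 + \<mu>\<close> yields, for each \<open>\<sigma>\<close>, a radius on which the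
  \<open>o(|x - x\<^sub>0|)\<close> error is at most \<open>\<sigma>|x - x\<^sub>0|\<close>. Conversely, the vectors \<open>p\<close> witnessing membership for
  \<open>\<sigma> = 1/(n+1)\<close> are bounded, and any limit point of them lies in \<open>D\<^sub>+u(t,x\<^sub>0)\<close>. If no \<open>\<eta>\<close> had the
  measure property, one could choose \<open>\<sigma>\<^sub>n\<close> such that \<open>\<Gamma>\<^sup>+\<^sub>\<eta>\<^sub>,\<^sub>\<sigma>\<^sub>,\<^sub>r(u,t)\<close> is null for \<open>\<eta> = 1/(n+1)\<close>,
  \<open>\<sigma> = \<sigma>\<^sub>n\<close> and every \<open>r > 0\<close>; by monotonicity the countably many of these sets with \<open>r = 1/(m+1)\<close>
  cover \<open>\<Gamma>\<^sup>+(u,t)\<close>.\<close>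

lemma hausdorff_pre_le_cover:
  assumes "A \<subseteq> (\<Union>i. C i)" "\<And>i. bounded (C i)" "\<And>i. diameter (C i) \<le> \<delta>"
  shows "hausdorff_pre s \<delta> A \<le> (\<Sum>i. hausdorff_piece s (C i))"
  unfolding hausdorff_pre_def by (rule INF_lower) (use assms in blast)

lemma hausdorff_pre_less_imp_cover:
  assumes "hausdorff_pre s \<delta> A < c"
  shows "\<exists>C. A \<subseteq> (\<Union>i. C i) \<and> (\<forall>i. bounded (C i) \<and> diameter (C i) \<le> \<delta>) \<and>
    (\<Sum>i. hausdorff_piece s (C i)) < c"
  using assms unfolding hausdorff_pre_def INF_less_iff by blast

lemma hausdorff_pre_Union_le_double_sum:
  assumes "\<And>n. A n \<subseteq> (\<Union>i. C n i)" "\<And>n i. bounded (C n i)" "\<And>n i. diameter (C n i) \<le> \<delta>"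
  shows "hausdorff_pre s \<delta> (\<Union>n. A n) \<le> (\<Sum>n. \<Sum>i. hausdorff_piece s (C n i))"
proof -
  define D where "D = case_prod C \<circ> prod_decode"
  have "(\<Union>n. A n) \<subseteq> (\<Union>i. D i)"
    using assms(1) by (auto simp add: D_def subset_eq) (metis prod.case prod_encode_inverse)
  moreover have "bounded (D i)" "diameter (D i) \<le> \<delta>" for i
    using assms(2,3) by (simp_all add: D_def split_def)
  ultimately have "hausdorff_pre s \<delta> (\<Union>n. A n) \<le> (\<Sum>i. hausdorff_piece s (D i))"
    by (rule hausdorff_pre_le_cover)
  also have "\<dots> = (\<Sum>n. \<Sum>i. hausdorff_piece s (C n i))"
    unfolding D_def comp_def by (intro suminf_ennreal_2dimen) (simp add: split_def)
  finally show ?thesis .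
qed

lemma hausdorff_pre_countably_subadditive:
  fixes A :: "nat \<Rightarrow> 'a::metric_space set"
  shows "hausdorff_pre s \<delta> (\<Union>n. A n) \<le> (\<Sum>n. hausdorff_pre s \<delta> (A n))"
proof (rule ennreal_le_epsilon)
  fix e :: real
  assume "0 < e" "(\<Sum>n. hausdorff_pre s \<delta> (A n)) < top"
  then have "hausdorff_pre s \<delta> (A n) < hausdorff_pre s \<delta> (A n) + e * (1/2) ^ Suc n" for n
    by (auto simp add: less_top ennreal_add_left_cancel_less dest!: ennreal_suminf_lessD)
  then have "\<forall>n. \<exists>C. A n \<subseteq> (\<Union>i. C i) \<and> (\<forall>i. bounded (C i) \<and> diameter (C i) \<le> \<delta>) \<and>
      (\<Sum>i. hausdorff_piece s (C i)) < hausdorff_pre s \<delta> (A n) + e * (1/2) ^ Suc n"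
    using hausdorff_pre_less_imp_cover by blast
  then obtain C where cover: "\<And>n. A n \<subseteq> (\<Union>i. C n i)"
    and small: "\<And>n i. bounded (C n i)" "\<And>n i. diameter (C n i) \<le> \<delta>"
    and close: "\<And>n. (\<Sum>i. hausdorff_piece s (C n i)) < hausdorff_pre s \<delta> (A n) + e * (1/2) ^ Suc n"
    by metis
  have "hausdorff_pre s \<delta> (\<Union>n. A n) \<le> (\<Sum>n. \<Sum>i. hausdorff_piece s (C n i))"
    using cover small by (rule hausdorff_pre_Union_le_double_sum)
  also have "\<dots> \<le> (\<Sum>n. hausdorff_pre s \<delta> (A n) + e * (1/2) ^ Suc n)"
    by (intro suminf_le less_imp_le close) auto
  also have "\<dots> = (\<Sum>n. hausdorff_pre s \<delta> (A n)) + (\<Sum>n. ennreal e * ennreal ((1/2) ^ Suc n))"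
    using \<open>0 < e\<close> by (subst suminf_add[symmetric])
      (auto simp del: ennreal_suminf_cmult simp add: ennreal_mult[symmetric])
  also have "\<dots> = (\<Sum>n. hausdorff_pre s \<delta> (A n)) + e"
    unfolding ennreal_suminf_cmult
    by (subst suminf_ennreal_eq[OF zero_le_power power_half_series]) auto
  finally show "hausdorff_pre s \<delta> (\<Union>n. A n) \<le> (\<Sum>n. hausdorff_pre s \<delta> (A n)) + e" .
qed

lemma hausdorff_measure_mono:
  assumes "A \<subseteq> B"
  shows "hausdorff_measure s A \<le> hausdorff_measure s B"
proof -
  have "hausdorff_pre s \<delta> A \<le> hausdorff_pre s \<delta> B" for \<delta>
    unfolding hausdorff_pre_def by (rule INF_superset_mono) (use assms in auto)
  then show ?thesis
    unfolding hausdorff_measure_def by (intro SUP_mono) auto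
qed

lemma hausdorff_measure_countably_subadditive:
  fixes A :: "nat \<Rightarrow> 'a::metric_space set"
  shows "hausdorff_measure s (\<Union>n. A n) \<le> (\<Sum>n. hausdorff_measure s (A n))"
  unfolding hausdorff_measure_def
proof (rule SUP_least)
  fix \<delta> :: real
  assume "\<delta> \<in> {0<..}"
  then have "hausdorff_pre s \<delta> (A n) \<le> (SUP \<delta>\<in>{0<..}. hausdorff_pre s \<delta> (A n))" for n
    by (rule SUP_upper)
  then have "(\<Sum>n. hausdorff_pre s \<delta> (A n)) \<le> (\<Sum>n. SUP \<delta>\<in>{0<..}. hausdorff_pre s \<delta> (A n))"
    by (intro suminf_le) auto
  then show "hausdorff_pre s \<delta> (\<Union>n. A n) \<le> (\<Sum>n. SUP \<delta>\<in>{0<..}. hausdorff_pre s \<delta> (A n))"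
    by (rule order_trans[OF hausdorff_pre_countably_subadditive])
qed

lemma hausdorff_measure_Union_null:
  fixes A :: "nat \<Rightarrow> 'a::metric_space set"
  assumes "\<And>n. hausdorff_measure s (A n) = 0"
  shows "hausdorff_measure s (\<Union>n. A n) = 0"
  using hausdorff_measure_countably_subadditive[of s A] by (simp add: assms)

lemma Vn_ge_antimono:
  assumes "Vn_ge U u r' t x \<eta>'" "\<eta> \<le> \<eta>'" "r \<le> r'"
  shows "Vn_ge U u r t x \<eta>"
  unfolding Vn_ge_def
proof (intro allI impI)
  fix s
  assume s: "t - r \<le> s \<and> s < t"
  have "cball x (\<eta> * (t - s)) \<subseteq> cball x (\<eta>' * (t - s))"
    using s assms(2) by (intro subset_cball mult_right_mono) auto
  also have "\<dots> \<subseteq> - Omega U u s"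
    using assms(1,3) s unfolding Vn_ge_def by auto
  finally show "cball x (\<eta> * (t - s)) \<subseteq> - Omega U u s" .
qed

lemma Dplus_sr_mono:
  assumes "\<sigma> \<le> \<sigma>'" "r \<le> r'"
  shows "Dplus_sr U u \<sigma> r' t x \<subseteq> Dplus_sr U u \<sigma>' r t x"
proof
  fix p
  assume p: "p \<in> Dplus_sr U u \<sigma> r' t x"
  have "u t y \<le> p \<bullet> (y - x) + \<sigma>' * norm (y - x)"
    if "y \<in> ball x r \<inter> closure (Omega U u t) \<inter> U" for y
  proof -
    have "u t y \<le> p \<bullet> (y - x) + \<sigma> * norm (y - x)"
      using p that assms(2) unfolding Dplus_sr_def by auto
    also have "\<dots> \<le> p \<bullet> (y - x) + \<sigma>' * norm (y - x)"
      using assms(1) by (simp add: mult_right_mono)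
    finally show ?thesis .
  qed
  then show "p \<in> Dplus_sr U u \<sigma>' r t x"
    unfolding Dplus_sr_def by blast
qed

lemma Gamma_plus_param_mono:
  assumes "\<eta> \<le> \<eta>'" "\<sigma> \<le> \<sigma>'" "r \<le> r'"
  shows "Gamma_plus_param U \<mu> u \<eta>' \<sigma> r' t \<subseteq> Gamma_plus_param U \<mu> u \<eta> \<sigma>' r t"
proof
  fix x
  assume "x \<in> Gamma_plus_param U \<mu> u \<eta>' \<sigma> r' t"
  then obtain p where "x \<in> frontier (Omega U u t)" "Vn_ge U u r' t x \<eta>'"
    "p \<in> Dplus_sr U u \<sigma> r' t x" "(norm p)\<^sup>2 - (1 + \<mu>) < - \<eta>'"
    unfolding Gamma_plus_param_def by blast
  with Vn_ge_antimono[OF _ assms(1,3)] Dplus_sr_mono[OF assms(2,3)] assms(1)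
  show "x \<in> Gamma_plus_param U \<mu> u \<eta> \<sigma>' r t"
    unfolding Gamma_plus_param_def by force
qed

lemma Dplus_imp_Dplus_sr:
  assumes "p \<in> Dplus U u t x" "\<sigma> > 0"
  shows "\<exists>r>0. p \<in> Dplus_sr U u \<sigma> r t x"
proof -
  obtain r where "r > 0" and r: "\<forall>y \<in> closure (Omega U u t) \<inter> U.
      norm (y - x) < r \<longrightarrow> u t y \<le> p \<bullet> (y - x) + \<sigma> * norm (y - x)"
    using assms unfolding Dplus_def by blast
  from r have "p \<in> Dplus_sr U u \<sigma> r t x"
    unfolding Dplus_sr_def by (auto simp: dist_norm norm_minus_commute)
  with \<open>r > 0\<close> show ?thesis by blast
qed

lemma Dplus_sr_approx_imp_Dplus:
  assumes "\<And>\<epsilon>. \<epsilon> > 0 \<Longrightarrow> \<exists>p r. r > 0 \<and> norm (p - l) \<le> \<epsilon> \<and> p \<in> Dplus_sr U u \<epsilon> r t x"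
  shows "l \<in> Dplus U u t x"
  unfolding Dplus_def
proof (intro CollectI allI impI)
  fix \<epsilon> :: real
  assume "\<epsilon> > 0"
  then obtain p r where "r > 0" and close: "norm (p - l) \<le> \<epsilon> / 2"
    and p: "p \<in> Dplus_sr U u (\<epsilon> / 2) r t x"
    using assms[of "\<epsilon> / 2"] by auto
  have "u t y \<le> l \<bullet> (y - x) + \<epsilon> * norm (y - x)"
    if "y \<in> closure (Omega U u t) \<inter> U" "norm (y - x) < r" for y
  proof -
    have "u t y \<le> l \<bullet> (y - x) + (p - l) \<bullet> (y - x) + \<epsilon> / 2 * norm (y - x)"
      using p that unfolding Dplus_sr_def by (auto simp: dist_norm norm_minus_commute inner_diff_left)
    moreover have "(p - l) \<bullet> (y - x) \<le> \<epsilon> / 2 * norm (y - x)"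
      using norm_cauchy_schwarz[of "p - l" "y - x"] mult_right_mono[OF close norm_ge_zero[of "y - x"]]
      by linarith
    ultimately show ?thesis by linarith
  qed
  with \<open>r > 0\<close> show "\<exists>\<delta>>0. \<forall>y \<in> closure (Omega U u t) \<inter> U.
      norm (y - x) < \<delta> \<longrightarrow> u t y \<le> l \<bullet> (y - x) + \<epsilon> * norm (y - x)"
    by blast
qed

lemma Gamma_plus_subset_Union_Inter_Union:
  "Gamma_plus U \<mu> u t \<subseteq>
     (\<Union>\<eta>\<in>{0<..}. \<Inter>\<sigma>\<in>{0<..}. \<Union>r\<in>{0<..}. Gamma_plus_param U \<mu> u \<eta> \<sigma> r t)"
proof
  fix x
  assume "x \<in> Gamma_plus U \<mu> u t"
  then obtain p \<eta>\<^sub>0 r\<^sub>0 where x: "x \<in> frontier (Omega U u t)" "\<eta>\<^sub>0 > 0" "r\<^sub>0 > 0" "Vn_ge U u r\<^sub>0 t x \<eta>\<^sub>0"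
    and p: "p \<in> Dplus U u t x" "(norm p)\<^sup>2 < 1 + \<mu>"
    unfolding Gamma_plus_def Vn_pos_def by blast
  define \<eta> where "\<eta> = min \<eta>\<^sub>0 ((1 + \<mu> - (norm p)\<^sup>2) / 2)"
  have "\<eta> > 0"
    using x(2) p(2) by (simp add: \<eta>_def)
  have "\<exists>r>0. x \<in> Gamma_plus_param U \<mu> u \<eta> \<sigma> r t" if \<sigma>: "\<sigma> > 0" for \<sigma>
  proof -
    obtain \<delta> where "\<delta> > 0" "p \<in> Dplus_sr U u \<sigma> \<delta> t x"
      using Dplus_imp_Dplus_sr[OF p(1) \<sigma>] by blast
    then have "p \<in> Dplus_sr U u \<sigma> (min r\<^sub>0 \<delta>) t x"
      using Dplus_sr_mono[OF order_refl min.cobounded2] by blast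
    moreover have "Vn_ge U u (min r\<^sub>0 \<delta>) t x \<eta>"
      by (rule Vn_ge_antimono[OF x(4)]) (simp_all add: \<eta>_def)
    moreover have "(norm p)\<^sup>2 - (1 + \<mu>) < - \<eta>"
    proof -
      have "\<eta> \<le> (1 + \<mu> - (norm p)\<^sup>2) / 2"
        unfolding \<eta>_def by (rule min.cobounded2)
      with p(2) show ?thesis
        by simp
    qed
    ultimately show ?thesis
      using x(1,3) \<open>\<delta> > 0\<close> unfolding Gamma_plus_param_def
      by (intro exI[of _ "min r\<^sub>0 \<delta>"]) auto
  qed
  with \<open>\<eta> > 0\<close> show "x \<in> (\<Union>\<eta>\<in>{0<..}. \<Inter>\<sigma>\<in>{0<..}. \<Union>r\<in>{0<..}. Gamma_plus_param U \<mu> u \<eta> \<sigma> r t)"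
    by simp (meson greaterThan_iff)
qed

lemma Union_Inter_Union_subset_Gamma_plus:
  "(\<Union>\<eta>\<in>{0<..}. \<Inter>\<sigma>\<in>{0<..}. \<Union>r\<in>{0<..}. Gamma_plus_param U \<mu> u \<eta> \<sigma> r t)
     \<subseteq> Gamma_plus U \<mu> u t"
proof
  fix x
  assume "x \<in> (\<Union>\<eta>\<in>{0<..}. \<Inter>\<sigma>\<in>{0<..}. \<Union>r\<in>{0<..}. Gamma_plus_param U \<mu> u \<eta> \<sigma> r t)"
  then obtain \<eta> where "\<eta> > 0" and x: "\<And>\<sigma>. \<sigma> > 0 \<Longrightarrow> \<exists>r>0. x \<in> Gamma_plus_param U \<mu> u \<eta> \<sigma> r t"
    by simp (meson greaterThan_iff)
  have "\<exists>r p. r > 0 \<and> x \<in> frontier (Omega U u t) \<and> Vn_ge U u r t x \<eta> \<and>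
      p \<in> Dplus_sr U u (inverse (Suc n)) r t x \<and> (norm p)\<^sup>2 < 1 + \<mu> - \<eta>" for n
    using x[of "inverse (Suc n)"] unfolding Gamma_plus_param_def by force
  then obtain r p where r: "\<And>n. r n > 0" and x_frontier: "x \<in> frontier (Omega U u t)"
    and Vn: "\<And>n. Vn_ge U u (r n) t x \<eta>"
    and p: "\<And>n. p n \<in> Dplus_sr U u (inverse (Suc n)) (r n) t x"
    and p_norm: "\<And>n. (norm (p n))\<^sup>2 < 1 + \<mu> - \<eta>"
    by metis
  have "norm (p n) \<le> sqrt (1 + \<mu>)" for n
    using p_norm[of n] \<open>\<eta> > 0\<close> by (intro real_le_rsqrt) simp
  then have "bounded (range p)"
    unfolding bounded_iff by blast
  then obtain l g where g: "strict_mono g" and lim: "(p \<circ> g) \<longlonglongrightarrow> l"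
    using bounded_imp_convergent_subsequence by blast
  have "(norm l)\<^sup>2 \<le> 1 + \<mu> - \<eta>"
    using p_norm by (intro LIMSEQ_le_const2[OF tendsto_power[OF tendsto_norm[OF lim]]])
      (auto intro: less_imp_le)
  with \<open>\<eta> > 0\<close> have "(norm l)\<^sup>2 < 1 + \<mu>"
    by simp
  moreover have "l \<in> Dplus U u t x"
  proof (rule Dplus_sr_approx_imp_Dplus)
    fix \<epsilon> :: real
    assume "\<epsilon> > 0"
    have "\<forall>\<^sub>F n in sequentially. dist ((p \<circ> g) n) l < \<epsilon>"
      using lim \<open>\<epsilon> > 0\<close> by (rule tendstoD)
    moreover have "\<forall>\<^sub>F n in sequentially. ((\<lambda>n. inverse (real (Suc n))) \<circ> g) n < \<epsilon>"
      using LIMSEQ_subseq_LIMSEQ[OF LIMSEQ_inverse_real_of_nat g] \<open>\<epsilon> > 0\<close> by (rule order_tendstoD)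
    ultimately obtain n where n: "dist ((p \<circ> g) n) l < \<epsilon>"
      "((\<lambda>n. inverse (real (Suc n))) \<circ> g) n < \<epsilon>"
      using eventually_happens'[OF sequentially_bot eventually_conj] by blast
    then have "p (g n) \<in> Dplus_sr U u \<epsilon> (r (g n)) t x"
      using p Dplus_sr_mono[OF less_imp_le order_refl] by fastforce
    with n(1) r show "\<exists>q r. r > 0 \<and> norm (q - l) \<le> \<epsilon> \<and> q \<in> Dplus_sr U u \<epsilon> r t x"
      by (auto simp: dist_norm intro: less_imp_le)
  qed
  moreover have "Vn_pos U u t x"
    unfolding Vn_pos_def using \<open>\<eta> > 0\<close> r Vn by blast
  ultimately show "x \<in> Gamma_plus U \<mu> u t"
    unfolding Gamma_plus_def using x_frontier by blast
qed

lemma Gamma_plus_eq_Union_Inter_Union: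
  "Gamma_plus U \<mu> u t =
     (\<Union>\<eta>\<in>{0<..}. \<Inter>\<sigma>\<in>{0<..}. \<Union>r\<in>{0<..}. Gamma_plus_param U \<mu> u \<eta> \<sigma> r t)"
  by (rule equalityI[OF Gamma_plus_subset_Union_Inter_Union Union_Inter_Union_subset_Gamma_plus])

lemma hausdorff_measure_Union_Inter_Union_pos_imp:
  fixes G :: "real \<Rightarrow> real \<Rightarrow> real \<Rightarrow> 'a::metric_space set"
  assumes antimono: "\<And>\<eta> \<eta>' \<sigma> r r'. 0 < \<eta> \<Longrightarrow> \<eta> \<le> \<eta>' \<Longrightarrow> 0 < \<sigma> \<Longrightarrow> 0 < r \<Longrightarrow> r \<le> r' \<Longrightarrow>
      G \<eta>' \<sigma> r' \<subseteq> G \<eta> \<sigma> r"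
    and pos: "hausdorff_measure s (\<Union>\<eta>\<in>{0<..}. \<Inter>\<sigma>\<in>{0<..}. \<Union>r\<in>{0<..}. G \<eta> \<sigma> r) > 0"
  shows "\<exists>\<eta>>0. \<forall>\<sigma>>0. \<exists>r>0. hausdorff_measure s (G \<eta> \<sigma> r) > 0"
proof (rule ccontr)
  assume "\<not> ?thesis"
  then have "\<exists>\<sigma>>0. \<forall>r>0. hausdorff_measure s (G (inverse (Suc n)) \<sigma> r) = 0" for n
    by (simp add: not_gr_zero)
  then obtain \<sigma> where \<sigma>: "\<And>n. \<sigma> n > 0"
    and null: "\<And>n r. r > 0 \<Longrightarrow> hausdorff_measure s (G (inverse (Suc n)) (\<sigma> n) r) = 0"
    by metis
  have cover: "(\<Union>\<eta>\<in>{0<..}. \<Inter>\<sigma>\<in>{0<..}. \<Union>r\<in>{0<..}. G \<eta> \<sigma> r)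
      \<subseteq> (\<Union>n. \<Union>m. G (inverse (Suc n)) (\<sigma> n) (inverse (Suc m)))"
  proof
    fix x
    assume "x \<in> (\<Union>\<eta>\<in>{0<..}. \<Inter>\<sigma>\<in>{0<..}. \<Union>r\<in>{0<..}. G \<eta> \<sigma> r)"
    then obtain \<eta> where "\<eta> > 0" and x: "\<And>\<sigma>. \<sigma> > 0 \<Longrightarrow> \<exists>r>0. x \<in> G \<eta> \<sigma> r"
      by simp (meson greaterThan_iff)
    obtain n where n: "inverse (Suc n) < \<eta>"
      using reals_Archimedean \<open>\<eta> > 0\<close> by blast
    obtain r where "r > 0" "x \<in> G \<eta> (\<sigma> n) r"
      using x \<sigma> by blast
    moreover obtain m where "inverse (Suc m) < r"
      using reals_Archimedean \<open>r > 0\<close> by blast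
    ultimately have "x \<in> G (inverse (Suc n)) (\<sigma> n) (inverse (Suc m))"
      using antimono[of "inverse (Suc n)" \<eta> "\<sigma> n" "inverse (Suc m)" r] n \<sigma> by auto
    then show "x \<in> (\<Union>n. \<Union>m. G (inverse (Suc n)) (\<sigma> n) (inverse (Suc m)))"
      by blast
  qed
  have "hausdorff_measure s (\<Union>\<eta>\<in>{0<..}. \<Inter>\<sigma>\<in>{0<..}. \<Union>r\<in>{0<..}. G \<eta> \<sigma> r)
      \<le> hausdorff_measure s (\<Union>n. \<Union>m. G (inverse (Suc n)) (\<sigma> n) (inverse (Suc m)))"
    by (rule hausdorff_measure_mono[OF cover])
  also have "\<dots> = 0"
    by (intro hausdorff_measure_Union_null null) simp
  finally show False
    using pos by simp
qed

theorem lemma4p8: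
  fixes U :: "'a::euclidean_space set" and u :: "real \<Rightarrow> 'a \<Rightarrow> real"
    and T t \<mu> :: real
  assumes "open U" and "\<mu> > 0"
    and "\<forall>s\<in>{0..T}. \<forall>x\<in>U. u s x \<ge> 0"
    and "\<forall>s\<in>{0..T}. continuous_on U (u s)"
    and "t \<in> {0<..T}"
  shows "(\<forall>\<eta>1 \<eta>2 \<sigma> r0. 0 < \<eta>1 \<longrightarrow> \<eta>1 \<le> \<eta>2 \<longrightarrow> 0 < \<sigma> \<longrightarrow> 0 < r0 \<longrightarrow>
            Gamma_plus_param U \<mu> u \<eta>2 \<sigma> r0 t \<subseteq> Gamma_plus_param U \<mu> u \<eta>1 \<sigma> r0 t)
       \<and> (\<forall>\<eta> \<sigma> r1 r2. 0 < \<eta> \<longrightarrow> 0 < \<sigma> \<longrightarrow> 0 < r1 \<longrightarrow> r1 \<le> r2 \<longrightarrow>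
            Gamma_plus_param U \<mu> u \<eta> \<sigma> r2 t \<subseteq> Gamma_plus_param U \<mu> u \<eta> \<sigma> r1 t)
       \<and> (\<forall>\<eta> \<sigma>1 \<sigma>2 r0. 0 < \<eta> \<longrightarrow> 0 < \<sigma>1 \<longrightarrow> \<sigma>1 \<le> \<sigma>2 \<longrightarrow> 0 < r0 \<longrightarrow>
            Gamma_plus_param U \<mu> u \<eta> \<sigma>1 r0 t \<subseteq> Gamma_plus_param U \<mu> u \<eta> \<sigma>2 r0 t)
       \<and> Gamma_plus U \<mu> u t =
           (\<Union>\<eta>\<in>{0<..}. \<Inter>\<sigma>\<in>{0<..}. \<Union>r0\<in>{0<..}. Gamma_plus_param U \<mu> u \<eta> \<sigma> r0 t)
       \<and> (hausdorff_measure (real DIM('a) - 1) (Gamma_plus U \<mu> u t) > 0 \<longrightarrow>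
           (\<exists>\<eta>>0. \<forall>\<sigma>>0. \<exists>r0>0.
              hausdorff_measure (real DIM('a) - 1) (Gamma_plus_param U \<mu> u \<eta> \<sigma> r0 t) > 0))"
proof -
  \<comment> \<open>None of the hypotheses on \<open>U\<close>, \<open>u\<close>, \<open>\<mu>\<close> and \<open>t\<close> is needed.\<close>
  let ?G = "\<lambda>\<eta> \<sigma> r. Gamma_plus_param U \<mu> u \<eta> \<sigma> r t"
  let ?H = "hausdorff_measure (real DIM('a) - 1)"
  have mono: "?G \<eta>' \<sigma> r' \<subseteq> ?G \<eta> \<sigma>' r" if "\<eta> \<le> \<eta>'" "\<sigma> \<le> \<sigma>'" "r \<le> r'" for \<eta> \<eta>' \<sigma> \<sigma>' r r'
    using that by (rule Gamma_plus_param_mono)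
  have eq: "Gamma_plus U \<mu> u t = (\<Union>\<eta>\<in>{0<..}. \<Inter>\<sigma>\<in>{0<..}. \<Union>r\<in>{0<..}. ?G \<eta> \<sigma> r)"
    by (rule Gamma_plus_eq_Union_Inter_Union)
  have "\<exists>\<eta>>0. \<forall>\<sigma>>0. \<exists>r>0. ?H (?G \<eta> \<sigma> r) > 0" if "?H (Gamma_plus U \<mu> u t) > 0"
    using that unfolding eq by (rule hausdorff_measure_Union_Inter_Union_pos_imp[rotated]) (simp add: mono)
  with eq show ?thesis
    by (intro conjI allI impI mono order_refl) auto
qed

end
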